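(* Let $N\ge 2$ and let $p(z)=\sum_{k=0}^{N-1}\alpha_kz^k$ be a nonconstant complex polynomial. Let $f_n$ ($n=0,\ldots,N-1$) and $f_n'$ ($n=0,\ldots,N-1$) be as defined below, and set $$k:=\max\{n: f_n\neq 0\},\qquad k':=\max\{n: f_n'\neq0\},\qquad m:=-\frac{k}{2}+\sqrt{\frac{f_k'}{f_k}+\frac{k^2}{4}}.$$ Then $k\ge k'$, $m\in\mathbb{N}_0=\{0,1,2,\ldots\}$ (in particular $f_k'/f_k$ is a nonnegative real number), and $$\alpha_j=0 \text{ for } j<m,\qquad \alpha_m\neq0,\quad \alpha_{m+k}\neq 0,\qquad \alpha_j=0\text{ for } j>m+k.$$ In particular, $\deg(p)=m+k$.
   Context: $\omega_m:=e^{2\pi i/m}$. For $n=0,\ldots,N-1$, $f_n:=\frac{1}{2N-1}\sum_{j=0}^{2N-2}|p(\omega_{2N-1}^j)|^2\exp\big(-\frac{2\pi i jn}{2N-1}\big)$. For $n=0,\ldots,N-2$, $f_n':=\frac{1}{2N-3}\sum_{j=0}^{2N-4}|p'(\omega_{2N-3}^j)|^2\exp\big(-\frac{2\pi i jn}{2N-3}\big)$, and $f_{N-1}':=0$. *)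

theory Defs
  imports "HOL-Analysis.Analysis" "HOL-Computational_Algebra.Polynomial"
begin

definition omega :: "nat \<Rightarrow> complex" where
  "omega m = exp (2 * pi * \<i> / of_nat m)"

definition fcoef :: "nat \<Rightarrow> complex poly \<Rightarrow> nat \<Rightarrow> complex" where
  "fcoef N p n = (if n < N then
     (1 / of_nat (2*N-1)) * (\<Sum>j = 0..2*N-2.
        complex_of_real ((cmod (poly p (omega (2*N-1) ^ j)))\<^sup>2)
        * exp (- (2 * pi * \<i> * of_nat j * of_nat n / of_nat (2*N-1))))
   else 0)"

text \<open>f'_n for n = 0..N-2 built from the derivative p'; f'_{N-1} = 0 (and 0 beyond)\<close>
definition fcoef' :: "nat \<Rightarrow> complex poly \<Rightarrow> nat \<Rightarrow> complex" where
  "fcoef' N p n = (if n + 2 \<le> N then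
     (1 / of_nat (2*N-3)) * (\<Sum>j = 0..2*N-4.
        complex_of_real ((cmod (poly (pderiv p) (omega (2*N-3) ^ j)))\<^sup>2)
        * exp (- (2 * pi * \<i> * of_nat j * of_nat n / of_nat (2*N-3))))
   else 0)"

end

theory Submission
  imports Defs
begin

text \<open>
  Since \<open>|p|\<^sup>2\<close> restricted to the unit circle is a trigonometric polynomial with frequencies
  in \<open>{-(N-1)..N-1}\<close>, its discrete Fourier transform on \<open>2N-1\<close> roots of unity recovers the
  coefficient autocorrelation \<open>f\<^sub>n = \<Sum>\<^sub>i \<alpha>\<^sub>i\<^sub>+\<^sub>n \<alpha>\<^sub>i\<^sup>*\<close> exactly; likewise for \<open>p'\<close>.
  If the nonzero coefficients of \<open>p\<close> lie between \<open>\<alpha>\<^sub>m \<noteq> 0\<close> and \<open>\<alpha>\<^sub>m\<^sub>+\<^sub>k \<noteq> 0\<close>, the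
  autocorrelation vanishes beyond lag \<open>k\<close> and equals \<open>\<alpha>\<^sub>m\<^sub>+\<^sub>k \<alpha>\<^sub>m\<^sup>*\<close> at lag \<open>k\<close>. The
  coefficients of \<open>p'\<close> lie in the window shifted by one, with extreme values \<open>m \<alpha>\<^sub>m\<close> and
  \<open>(m+k) \<alpha>\<^sub>m\<^sub>+\<^sub>k\<close>, so \<open>f'\<^sub>k / f\<^sub>k = m (m+k)\<close>, and solving this quadratic for \<open>m\<close> gives
  the stated formula.
\<close>

lemma omega_pow: "omega L ^ j = exp (2 * of_real pi * \<i> * of_nat j / of_nat L)"
  unfolding omega_def exp_of_nat_mult [symmetric] by (simp add: field_simps)

lemma omega_pow_eq_iff:
  assumes "L > 0"
  shows "omega L ^ a = omega L ^ b \<longleftrightarrow> a mod L = b mod L"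
  using complex_root_unity_eq[of L a b] assms by (simp add: omega_pow)

lemma omega_pow_self: "L > 0 \<Longrightarrow> omega L ^ L = 1"
  using complex_root_unity[of L 1] by (simp add: omega_pow)

lemma cnj_omega: "cnj (omega L) = inverse (omega L)"
  by (simp add: omega_def exp_cnj exp_minus [symmetric])

lemma sum_omega_pow_orthogonal:
  assumes "a < L" "c < L"
  shows "(\<Sum>j<L. (omega L ^ a * inverse (omega L) ^ c) ^ j) = (if a = c then of_nat L else 0)"
proof (cases "a = c")
  case True
  then show ?thesis by (simp add: power_inverse omega_def)
next
  case False
  define x where "x = omega L ^ a * inverse (omega L) ^ c"
  have omega_nz: "omega L \<noteq> 0" by (simp add: omega_def)
  have "x \<noteq> 1"
    using False assms omega_pow_eq_iff[of L a c] omega_nz by (auto simp: x_def field_simps)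
  moreover have "x ^ L = 1"
    using assms omega_pow_self[of L]
    by (simp add: x_def power_mult_distrib power_inverse flip: power_mult) (simp add: power_mult mult.commute)
  ultimately show ?thesis using False by (simp add: x_def [symmetric] sum_gp_strict)
qed

definition autocorr :: "complex poly \<Rightarrow> nat \<Rightarrow> complex" where
  "autocorr q n = (\<Sum>i\<le>degree q. coeff q (i + n) * cnj (coeff q i))"

lemma exp_conv_inverse_omega_pow:
  "exp (- (2 * pi * \<i> * of_nat j * of_nat n / of_nat L)) = inverse (omega L) ^ (j * n)"
proof -
  have "inverse (omega L) ^ (j * n) = exp (of_nat (j * n) * - (2 * pi * \<i> / of_nat L))"
    by (simp only: omega_def exp_minus [symmetric] exp_of_nat_mult)
  then show ?thesis
    by (simp add: field_simps)
qed

lemma cmod_poly_omega_pow_sq: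
  "complex_of_real ((cmod (poly q (omega L ^ j)))\<^sup>2) * inverse (omega L) ^ (j * n) =
     (\<Sum>a\<le>degree q. \<Sum>b\<le>degree q.
        coeff q a * cnj (coeff q b) * (omega L ^ a * inverse (omega L) ^ (b + n)) ^ j)"
proof -
  have pow_swap: "(x ^ j) ^ i = (x ^ i) ^ j" for x :: complex and i
    by (simp flip: power_mult add: mult.commute)
  have "complex_of_real ((cmod (poly q (omega L ^ j)))\<^sup>2) =
        (\<Sum>a\<le>degree q. coeff q a * (omega L ^ a) ^ j) *
        (\<Sum>b\<le>degree q. cnj (coeff q b) * (inverse (omega L) ^ b) ^ j)"
    unfolding complex_norm_square by (simp add: poly_altdef cnj_omega pow_swap)
  also have "\<dots> * inverse (omega L) ^ (j * n) = (\<Sum>a\<le>degree q. \<Sum>b\<le>degree q.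
        coeff q a * cnj (coeff q b) * (omega L ^ a * inverse (omega L) ^ (b + n)) ^ j)"
    unfolding sum_product sum_distrib_right
    by (simp add: sum_distrib_left power_mult_distrib power_add power_mult pow_swap ac_simps)
  finally show ?thesis .
qed

lemma dft_cmod_poly_sq:
  assumes "degree q + n < L"
  shows "1 / of_nat L * (\<Sum>j<L. complex_of_real ((cmod (poly q (omega L ^ j)))\<^sup>2)
           * exp (- (2 * pi * \<i> * of_nat j * of_nat n / of_nat L))) = autocorr q n"
proof -
  let ?d = "degree q" and ?w = "omega L"
  have "(\<Sum>j<L. complex_of_real ((cmod (poly q (?w ^ j)))\<^sup>2)
           * exp (- (2 * pi * \<i> * of_nat j * of_nat n / of_nat L)))
      = (\<Sum>a\<le>?d. \<Sum>b\<le>?d. coeff q a * cnj (coeff q b) *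
           (\<Sum>j<L. (?w ^ a * inverse ?w ^ (b + n)) ^ j))"
    unfolding exp_conv_inverse_omega_pow cmod_poly_omega_pow_sq sum_distrib_left
    by (subst sum.swap) (rule sum.cong [OF refl sum.swap])
  also have "\<dots> = (\<Sum>a\<le>?d. \<Sum>b\<le>?d. if a = b + n then of_nat L * (coeff q (b + n) * cnj (coeff q b)) else 0)"
    using assms by (intro sum.cong refl) (simp add: sum_omega_pow_orthogonal)
  also have "\<dots> = of_nat L * autocorr q n"
    by (subst sum.swap) (auto simp: autocorr_def sum_distrib_left coeff_eq_0 intro!: sum.cong)
  finally show ?thesis
    using assms by simp
qed

lemma autocorr_of_support:
  assumes supp: "\<And>i. coeff q i \<noteq> 0 \<Longrightarrow> m \<le> i \<and> i \<le> m + s" and "s \<le> n"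
  shows "autocorr q n = coeff q (m + n) * cnj (coeff q m)"
proof -
  have "coeff q (i + n) * cnj (coeff q i) = (if i = m then coeff q (m + n) * cnj (coeff q m) else 0)"
    for i
  proof (cases "i = m \<or> coeff q i = 0")
    case False
    then have "coeff q (i + n) = 0"
      using supp [of i] supp [of "i + n"] \<open>s \<le> n\<close> by fastforce
    with False show ?thesis by simp
  qed auto
  then have "autocorr q n = (if m \<le> degree q then coeff q (m + n) * cnj (coeff q m) else 0)"
    by (simp add: autocorr_def)
  then show ?thesis
    by (auto simp: coeff_eq_0)
qed

lemma autocorr_eq_0_beyond_support:
  assumes "\<And>i. coeff q i \<noteq> 0 \<Longrightarrow> m \<le> i \<and> i \<le> m + s" and "s < n"
  shows "autocorr q n = 0"
  using autocorr_of_support [OF assms(1), where n = n] assms by fastforce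

lemma autocorr_0_eq_0_iff: "autocorr q 0 = 0 \<longleftrightarrow> q = 0"
proof
  assume "autocorr q 0 = 0"
  moreover have "autocorr q 0 = of_real (\<Sum>i\<le>degree q. (cmod (coeff q i))\<^sup>2)"
    unfolding autocorr_def of_real_sum by (intro sum.cong refl) (simp only: add_0_right complex_norm_square)
  ultimately have "(\<Sum>i\<le>degree q. (cmod (coeff q i))\<^sup>2) = 0"
    by (metis of_real_eq_0_iff)
  then have "coeff q (degree q) = 0"
    by (subst (asm) sum_nonneg_eq_0_iff) auto
  then show "q = 0"
    by simp
qed (simp add: autocorr_def)

lemma coeff_pderiv_support:
  fixes p :: "'a::{comm_semiring_1,semiring_no_zero_divisors} poly"
  assumes "\<And>i. coeff p i \<noteq> 0 \<Longrightarrow> m \<le> i \<and> i \<le> m + s" and "coeff (pderiv p) i \<noteq> 0"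
  shows "m - 1 \<le> i \<and> i \<le> m - 1 + s"
  using assms(1) [of "Suc i"] assms(2) by (auto simp: coeff_pderiv)

lemma autocorr_pderiv_top_lag:
  assumes supp: "\<And>i. coeff p i \<noteq> 0 \<Longrightarrow> m \<le> i \<and> i \<le> m + s"
  shows "autocorr (pderiv p) s = of_nat (m * (m + s)) * autocorr p s"
proof -
  \<comment> \<open>For \<open>m = 0\<close> the truncated window \<open>[0, s]\<close> is one too wide, and the value is \<open>0\<close>.\<close>
  have "autocorr (pderiv p) s = coeff (pderiv p) (m - 1 + s) * cnj (coeff (pderiv p) (m - 1))"
    using coeff_pderiv_support [OF supp] by (intro autocorr_of_support) auto
  also have "\<dots> = of_nat (m * (m + s)) * (coeff p (m + s) * cnj (coeff p m))"
    using supp [of "Suc s"] by (cases m) (force simp: coeff_pderiv algebra_simps)+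
  also have "coeff p (m + s) * cnj (coeff p m) = autocorr p s"
    using supp by (intro autocorr_of_support [symmetric]) auto
  finally show ?thesis .
qed

lemma Max_lag_autocorr:
  assumes supp: "\<And>i. coeff q i \<noteq> 0 \<Longrightarrow> m \<le> i \<and> i \<le> m + s"
    and "coeff q m \<noteq> 0" "coeff q (m + s) \<noteq> 0" "finite A" "s \<in> A"
  shows "Max {n \<in> A. autocorr q n \<noteq> 0} = s"
  using assms autocorr_of_support [OF supp, where n = s] autocorr_eq_0_beyond_support [OF supp]
  by (intro Max_eqI) (auto simp: not_le [symmetric])

lemma Max_lag_autocorr_le:
  assumes "\<And>i. coeff q i \<noteq> 0 \<Longrightarrow> m \<le> i \<and> i \<le> m + s"
    and "q \<noteq> 0" "finite A" "0 \<in> A"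
  shows "Max {n \<in> A. autocorr q n \<noteq> 0} \<le> s"
  using assms autocorr_eq_0_beyond_support [OF assms(1)] autocorr_0_eq_0_iff [of q]
  by (intro Max.boundedI) (auto simp: not_le [symmetric])

lemma csqrt_of_nat_square_completion:
  "csqrt (of_nat (m * (m + k)) + (of_nat k)\<^sup>2 / 4) = of_nat m + of_nat k / 2"
  by (rule csqrt_unique) (auto simp: power2_eq_square field_simps)

lemma fcoef_eq_autocorr:
  assumes "degree p < N"
  shows "fcoef N p n = (if n < N then autocorr p n else 0)"
proof (cases "n < N")
  case True
  then have "{0..2 * N - 2} = {..<2 * N - 1}"
    by auto
  with True assms dft_cmod_poly_sq [of p n "2 * N - 1"] show ?thesis
    by (simp add: fcoef_def)
qed (simp add: fcoef_def)

lemma fcoef'_eq_autocorr_pderiv: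
  assumes "degree p < N"
  shows "fcoef' N p n = (if n + 2 \<le> N then autocorr (pderiv p) n else 0)"
proof (cases "n + 2 \<le> N")
  case True
  then have "{0..2 * N - 4} = {..<2 * N - 3}"
    by auto
  moreover have "degree (pderiv p) + n < 2 * N - 3"
    using True assms by (simp add: degree_pderiv)
  ultimately show ?thesis
    using True dft_cmod_poly_sq [of "pderiv p" n "2 * N - 3"] by (simp add: fcoef'_def)
qed (simp add: fcoef'_def)

lemma lowest_coeff_exists:
  fixes p :: "'a::zero poly"
  assumes "p \<noteq> 0"
  obtains m where "coeff p m \<noteq> 0" "\<And>j. j < m \<Longrightarrow> coeff p j = 0"
proof
  show "coeff p (LEAST i. coeff p i \<noteq> 0) \<noteq> 0"
    using assms LeastI [of "\<lambda>i. coeff p i \<noteq> 0" "degree p"] by simp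
  show "coeff p j = 0" if "j < (LEAST i. coeff p i \<noteq> 0)" for j
    using not_less_Least [OF that] by simp
qed

lemma Max_lag_fcoef:
  assumes supp: "\<And>i. coeff p i \<noteq> 0 \<Longrightarrow> m \<le> i \<and> i \<le> m + s"
    and "coeff p m \<noteq> 0" "coeff p (m + s) \<noteq> 0" "degree p < N"
  shows "Max {n. n < N \<and> fcoef N p n \<noteq> 0} = s"
proof -
  have "s < N"
    using assms(3,4) le_degree [of p "m + s"] by linarith
  moreover have "{n. n < N \<and> fcoef N p n \<noteq> 0} = {n \<in> {..<N}. autocorr p n \<noteq> 0}"
    using assms(4) by (auto simp: fcoef_eq_autocorr)
  ultimately show ?thesis
    using Max_lag_autocorr [of p m s "{..<N}", OF supp assms(2,3)] by simp
qed

lemma Max_lag_fcoef'_le: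
  assumes supp: "\<And>i. coeff p i \<noteq> 0 \<Longrightarrow> m \<le> i \<and> i \<le> m + s"
    and "degree p < N" "N \<ge> 2" "degree p \<ge> 1"
  shows "Max {n. n < N \<and> fcoef' N p n \<noteq> 0} \<le> s"
proof -
  have lags: "{n. n < N \<and> fcoef' N p n \<noteq> 0} = {n \<in> {..<N - 1}. autocorr (pderiv p) n \<noteq> 0}"
    using assms(2) by (auto simp: fcoef'_eq_autocorr_pderiv)
  have "m - 1 \<le> i \<and> i \<le> m - 1 + s" if "coeff (pderiv p) i \<noteq> 0" for i
    by (rule coeff_pderiv_support [of p m s i, OF supp that])
  moreover have "pderiv p \<noteq> 0"
    using assms(4) by (simp add: pderiv_eq_0_iff)
  ultimately show ?thesis
    unfolding lags using assms(3) Max_lag_autocorr_le [of "pderiv p" "m - 1" s "{..<N - 1}"] by simp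
qed

lemma fcoef'_top_lag:
  assumes supp: "\<And>i. coeff p i \<noteq> 0 \<Longrightarrow> m \<le> i \<and> i \<le> m + s"
    and "coeff p (m + s) \<noteq> 0" "degree p < N"
  shows "fcoef' N p s = of_nat (m * (m + s)) * fcoef N p s"
proof -
  have "m + s < N"
    using assms(2,3) le_degree [of p "m + s"] by linarith
  then show ?thesis
    using autocorr_pderiv_top_lag [OF supp] assms(3)
    by (cases m) (auto simp: fcoef_eq_autocorr fcoef'_eq_autocorr_pderiv)
qed

theorem lemma3p3:
  fixes N :: nat and p :: "complex poly"
  assumes "N \<ge> 2" and "degree p \<le> N - 1" and "degree p \<ge> 1"
  defines "k \<equiv> Max {n. n < N \<and> fcoef N p n \<noteq> 0}"
      and "k' \<equiv> Max {n. n < N \<and> fcoef' N p n \<noteq> 0}"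
  shows "k \<ge> k' \<and>
    fcoef' N p k / fcoef N p k \<in> \<real> \<and> Re (fcoef' N p k / fcoef N p k) \<ge> 0 \<and>
    (\<exists>m::nat. of_nat m = - of_nat k / 2 + csqrt (fcoef' N p k / fcoef N p k + (of_nat k)\<^sup>2 / 4)
      \<and> (\<forall>j<m. coeff p j = 0) \<and> coeff p m \<noteq> 0 \<and> coeff p (m + k) \<noteq> 0
      \<and> (\<forall>j>m + k. coeff p j = 0) \<and> degree p = m + k)"
proof -
  have deg: "degree p < N" "p \<noteq> 0"
    using assms(1-3) by auto
  obtain m where low: "coeff p m \<noteq> 0" and below: "\<And>j. j < m \<Longrightarrow> coeff p j = 0"
    using lowest_coeff_exists [OF deg(2)] by blast
  define s where "s = degree p - m"
  have m_le: "m \<le> degree p"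
    using low le_degree by blast
  have supp: "m \<le> i \<and> i \<le> m + s" if "coeff p i \<noteq> 0" for i
    using that below [of i] le_degree [of p i] by (force simp: s_def)
  have lead: "coeff p (m + s) \<noteq> 0"
    using deg(2) m_le by (simp add: s_def)
  have k: "k = s"
    unfolding k_def using supp low lead deg(1) by (rule Max_lag_fcoef)
  have "fcoef N p k = coeff p (m + s) * cnj (coeff p m)"
    using autocorr_of_support [of p m s s] supp m_le deg(1) by (simp add: k s_def fcoef_eq_autocorr)
  then have "fcoef N p k \<noteq> 0"
    using lead low by simp
  then have ratio: "fcoef' N p k / fcoef N p k = of_nat (m * (m + k))"
    using fcoef'_top_lag [OF supp lead deg(1)] k by simp
  show ?thesis
  proof (intro conjI exI [of _ m] allI impI)
    show "k' \<le> k"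
      unfolding k'_def k using supp deg(1) assms(1,3) by (rule Max_lag_fcoef'_le)
    show "of_nat m = - of_nat k / 2 + csqrt (fcoef' N p k / fcoef N p k + (of_nat k)\<^sup>2 / 4)"
      unfolding ratio csqrt_of_nat_square_completion by simp
    show "fcoef' N p k / fcoef N p k \<in> \<real>" "Re (fcoef' N p k / fcoef N p k) \<ge> 0"
      unfolding ratio by simp_all
    show "coeff p j = 0" if "m + k < j" for j
      using that m_le by (simp add: k s_def coeff_eq_0)
  qed (use below low lead m_le in \<open>simp_all add: k s_def\<close>)
qed

end
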